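(* Let $\Gamma_\mu:\mathbb{R}^N_+\to\mathbb{R}^N_+$ be the operator induced by $\Gamma\in(\mathcal{K}_\infty\cup\{0\})^{N\times N}$ and monotone aggregation functions $\mu_1,\dots,\mu_N$, satisfying the small gain condition $\Gamma_\mu(s)\not\ge s$ for all $s\in\mathbb{R}^N_+\setminus\{0\}$, and assume $\Gamma$ has no zero row, i.e. $\Gamma_\mu(e)_i\neq0$ for all $i$. Let $\kappa_0>0$, $\kappa_\Gamma>\kappa_h>0$, let $\phi$ be as in the context and let $c\in\mathbb{R}^N$ with $c\gg0$ and $\|c\|<\kappa_\Gamma/2$. Then there exists $\delta>0$ such that: for every $(N+1)$-simplex $\langle y^1,\dots,y^{N+2}\rangle$ of $\tilde K_1(\delta)$ (so $y^{N+2}=y^1+(\delta,\dots,\delta,1)^\top$), writing $y^j=(v^j,t_j)$, if $v^j\in\mathbb{R}^N_+$ and $\kappa_\Gamma/2\le\|v^j\|<\kappa_\Gamma+\kappa_0$ for $j=1,\dots,N+1$ and $\kappa_\Gamma+\kappa_0\le\|v^{N+2}\|\le\kappa_\Gamma+\kappa_0+\delta$, then the facet $\tau=\langle y^1,\dots,y^{N+1}\rangle$ is not complete. Moreover $\delta$ can be chosen so that in addition $\delta\sqrt N<(\kappa_\Gamma-\kappa_h)/2$, whence every point of $\mathbb{R}^N_+$ at distance less than $\delta\sqrt N$ from a fixed point of $\phi$ has norm less than $\kappa_\Gamma/2$.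
   Context: Order on $\mathbb{R}^N$: $v\ge w$ iff $v_i\ge w_i$ for all $i$; $v>w$ iff $v\ge w$, $v\ne w$; $v\gg w$ iff $v_i>w_i$ for all $i$. $\|\cdot\|$ Euclidean norm, $e=(1,\dots,1)^\top$. $\mathcal{K}_\infty$: continuous, strictly increasing, unbounded $\gamma:\mathbb{R}_+\to\mathbb{R}_+$ with $\gamma(0)=0$; $0$ denotes the zero function. A monotone aggregation function is a continuous $\mu_i:\mathbb{R}^N_+\to\mathbb{R}_+$ with $\mu_i(s)=0$ iff $s=0$, $\mu_i(s)<\mu_i(t)$ whenever $s\ll t$, and $\mu_i(s)\to\infty$ as $\|s\|\to\infty$. The induced operator is $\Gamma_\mu(s)_i=\mu_i(\gamma_{i1}(s_1),\dots,\gamma_{iN}(s_N))$. Given $\kappa_0>0$, $\kappa_\Gamma>\kappa_h>0$, $\phi(v)=\Gamma_\mu(v)\big(1+\min\{0,\frac{\kappa_\Gamma-2\|v\|}{\|v\|+\kappa_0}\}\big)+\max\{0,\kappa_h-2\|v\|\}e$ for $v\in\mathbb{R}^N_+$. Triangulation $\tilde K_1(\delta)$: with $P=\mathrm{diag}(\delta,\dots,\delta,1)$, its $(N+1)$-simplices are $\langle y^1,\dots,y^{N+2}\rangle$ with $y^1=(\delta z,0)$, $z\in\mathbb{Z}^N$, $y^{i+1}=y^i+Pe_{\pi(i)}$ for a permutation $\pi$ of $\{1,\dots,N+1\}$; all vertices lie in $\mathbb{R}^N\times\{0,1\}$ and are componentwise increasing. Its $N$-simplices are the facets of these. Homotopy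 $\vartheta(v,t)=(1-t)c+t\phi(v)$; labeling $l(v,t)=\vartheta(v,t)-v$. Labeling matrix $L(\tau)$ of $\tau=\langle y^1,\dots,y^{N+1}\rangle$: $(N+1)\times(N+1)$ with $j$-th column $(1,l(y^j)^\top)^\top$. $W\succ0$ (lexicographically positive) means the first nonzero entry of each row of $W$ is positive. $\tau$ is complete if $L(\tau)W=I_{N+1}$ has a solution $W\succ0$. *)

theory Defs
  imports "HOL-Analysis.Analysis"
begin

text \<open>Vectors in R^N are rendered as real^'n with 'n a finite linearly ordered index type
  (the linear order fixes the coordinate order 1..N needed for lexicographic positivity).\<close>

definition nonneg :: "real^'n \<Rightarrow> bool" where
  "nonneg v \<longleftrightarrow> (\<forall>i. 0 \<le> v$i)"

definition vge :: "real^'n \<Rightarrow> real^'n \<Rightarrow> bool" where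
  "vge v w \<longleftrightarrow> (\<forall>i. w$i \<le> v$i)"

definition vgg :: "real^'n \<Rightarrow> real^'n \<Rightarrow> bool" where
  "vgg v w \<longleftrightarrow> (\<forall>i. w$i < v$i)"

definition evec :: "real^'n" where
  "evec = (\<chi> i. 1)"

definition class_Kinf :: "(real \<Rightarrow> real) \<Rightarrow> bool" where
  "class_Kinf g \<longleftrightarrow> continuous_on {0..} g \<and> strict_mono_on {0..} g \<and> g 0 = 0
     \<and> (\<forall>M. \<exists>x\<ge>0. g x > M)"

definition zero_fun_on_nonneg :: "(real \<Rightarrow> real) \<Rightarrow> bool" where
  "zero_fun_on_nonneg g \<longleftrightarrow> (\<forall>x\<ge>0. g x = 0)"

definition MAF :: "(real^'n \<Rightarrow> real) \<Rightarrow> bool" where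
  "MAF m \<longleftrightarrow> continuous_on {s. nonneg s} m
     \<and> (\<forall>s. nonneg s \<longrightarrow> 0 \<le> m s)
     \<and> (\<forall>s. nonneg s \<longrightarrow> (m s = 0 \<longleftrightarrow> s = 0))
     \<and> (\<forall>s t. nonneg s \<and> nonneg t \<and> vgg t s \<longrightarrow> m s < m t)
     \<and> (\<forall>M. \<exists>R. \<forall>s. nonneg s \<and> norm s > R \<longrightarrow> m s > M)"

definition Gamma_mu :: "('n \<Rightarrow> real^'n \<Rightarrow> real) \<Rightarrow> ('n \<Rightarrow> 'n \<Rightarrow> real \<Rightarrow> real)
     \<Rightarrow> real^'n \<Rightarrow> real^'n" where
  "Gamma_mu mu gam s = (\<chi> i. mu i (\<chi> j. gam i j (s$j)))"

definition phi :: "('n \<Rightarrow> real^'n \<Rightarrow> real) \<Rightarrow> ('n \<Rightarrow> 'n \<Rightarrow> real \<Rightarrow> real)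
     \<Rightarrow> real \<Rightarrow> real \<Rightarrow> real \<Rightarrow> real^'n \<Rightarrow> real^'n" where
  "phi mu gam k0 kG kh v =
     (1 + min 0 ((kG - 2 * norm v) / (norm v + k0))) *\<^sub>R Gamma_mu mu gam v
     + max 0 (kh - 2 * norm v) *\<^sub>R evec"

definition labl :: "(real^'n \<Rightarrow> real^'n) \<Rightarrow> real^'n \<Rightarrow> real^'n \<Rightarrow> real \<Rightarrow> real^'n" where
  "labl ph c v t = ((1 - t) *\<^sub>R c + t *\<^sub>R ph v) - v"

text \<open>Vertices of the (N+1)-simplex of K1~(delta) given by the base point (delta z, 0) and a
  permutation pi of the N+1 coordinate directions, encoded as a bijection from {0..N}
  onto 'n option (None = the homotopy coordinate t).  Vertex k (0-indexed, k = 0..N+1)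
  is y^(k+1) = y^1 + sum_(m<k) P e_(pi m).\<close>
definition vert_v :: "real \<Rightarrow> ('n \<Rightarrow> int) \<Rightarrow> (nat \<Rightarrow> 'n option) \<Rightarrow> nat \<Rightarrow> real^'n" where
  "vert_v d z p k = (\<chi> i. d * (of_int (z i) + real (card {m. m < k \<and> p m = Some i})))"

definition vert_t :: "(nat \<Rightarrow> 'n option) \<Rightarrow> nat \<Rightarrow> real" where
  "vert_t p k = real (card {m. m < k \<and> p m = None})"

definition is_K1_simplex :: "(nat \<Rightarrow> 'n::finite option) \<Rightarrow> bool" where
  "is_K1_simplex p \<longleftrightarrow> bij_betw p {0..<CARD('n) + 1} (UNIV :: 'n option set)"

text \<open>Order of the rows of the labeling matrix: the row of ones first, then coordinates.\<close>
fun opt_less :: "'n::linorder option \<Rightarrow> 'n option \<Rightarrow> bool" where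
  "opt_less None (Some _) = True"
| "opt_less (Some a) (Some b) = (a < b)"
| "opt_less _ None = False"

definition lex_pos :: "(nat \<Rightarrow> 'n::{finite,linorder} option \<Rightarrow> real) \<Rightarrow> bool" where
  "lex_pos W \<longleftrightarrow> (\<forall>j < CARD('n) + 1. \<exists>c. 0 < W j c \<and> (\<forall>c'. opt_less c' c \<longrightarrow> W j c' = 0))"

definition lab_matrix :: "(real^'n \<Rightarrow> real \<Rightarrow> real^'n) \<Rightarrow> (nat \<Rightarrow> real^'n)
     \<Rightarrow> (nat \<Rightarrow> real) \<Rightarrow> 'n option \<Rightarrow> nat \<Rightarrow> real" where
  "lab_matrix l vs ts r j = (case r of None \<Rightarrow> 1 | Some i \<Rightarrow> l (vs j) (ts j) $ i)"

definition complete :: "('n::{finite,linorder} option \<Rightarrow> nat \<Rightarrow> real) \<Rightarrow> bool" where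
  "complete L \<longleftrightarrow> (\<exists>W. (\<forall>r c. (\<Sum>j<CARD('n) + 1. L r j * W j c) = (if r = c then 1 else 0))
                       \<and> lex_pos W)"

end

theory Submission
  imports Defs
begin

(* If a facet tau of an (N+1)-simplex of K1~(delta) is complete, the first column w of the
   lexicographically positive inverse W of L(tau) is a vector of convex weights with
   sum_j w_j l(y^j) = 0, i.e. sum_j w_j q_j = sum_j w_j v^j for the homotopy values
   q_j = (1 - t_j) c + t_j phi(v^j).  When the simplex touches the sphere of radius
   kG + k0, every v^j lies within N(N+1) delta of it, so phi(v^j) is tiny (its scaling factor
   (kG + k0 - |v|)/(|v| + k0) vanishes there) and |q_j| <= |c| + small.  On the other hand
   the vertices of K1~(delta) increase componentwise, so the convex combination of the v^j
   dominates the nonnegative vertex v^1 and has norm at least |v^1|, close to kG + k0.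
   This is impossible for delta small enough.  The second part of the theorem is the small
   gain argument: a nonnegative fixed point w of phi has |w| < kh/2.  The hypotheses c >> 0,
   "no zero row" and the upper bound on |v^(N+2)| belong to the surrounding setting of the
   paper; the argument below does not need them. *)

section \<open>Comparison functions and the gain operator\<close>

lemma comparison_nonneg:
  assumes "class_Kinf g \<or> zero_fun_on_nonneg g" "0 \<le> x"
  shows "0 \<le> g x"
  using assms(1)
proof
  assume "class_Kinf g"
  then have sm: "strict_mono_on {0..} g" and "g 0 = 0" unfolding class_Kinf_def by blast+
  then show ?thesis
    using assms(2) strict_mono_onD[OF sm, of 0 x] by (cases "x = 0") auto
qed (use assms(2) in \<open>simp add: zero_fun_on_nonneg_def\<close>)

lemma comparison_mono:
  assumes "class_Kinf g \<or> zero_fun_on_nonneg g" "0 \<le> x" "x \<le> y"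
  shows "g x \<le> g y"
  using assms(1)
proof
  assume "class_Kinf g"
  then have sm: "strict_mono_on {0..} g" unfolding class_Kinf_def by blast
  show ?thesis
    using assms(2,3) strict_mono_onD[OF sm, of x y] by (cases "x = y") auto
qed (use assms in \<open>simp add: zero_fun_on_nonneg_def\<close>)

lemma Gamma_mu_nonneg:
  assumes gam_cls: "\<And>i j. class_Kinf (gam i j) \<or> zero_fun_on_nonneg (gam i j)"
    and mu_maf: "\<And>i. MAF (mu i)" and v: "nonneg v"
  shows "nonneg (Gamma_mu mu gam v)"
proof -
  have "nonneg (\<chi> j. gam i j (v$j))" for i
    using comparison_nonneg[OF gam_cls] v by (simp add: nonneg_def)
  then show ?thesis using mu_maf unfolding Gamma_mu_def MAF_def by (simp add: nonneg_def)
qed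

lemma Gamma_mu_bounded:
  assumes gam_cls: "\<And>i j. class_Kinf (gam i j) \<or> zero_fun_on_nonneg (gam i j)"
    and mu_maf: "\<And>i. MAF (mu i)" and v: "nonneg v" and R: "norm v \<le> R"
  shows "norm (Gamma_mu mu gam v) \<le> (\<Sum>i\<in>UNIV. mu i (\<chi> j. gam i j R + 1))"
proof -
  have "\<bar>Gamma_mu mu gam v $ i\<bar> \<le> mu i (\<chi> j. gam i j R + 1)" for i
  proof -
    have vj: "0 \<le> v$j" "v$j \<le> R" for j
      using v component_le_norm_cart[of v j] R by (auto simp: nonneg_def)
    have arg: "nonneg (\<chi> j. gam i j (v$j))"
      using comparison_nonneg[OF gam_cls] vj(1) by (simp add: nonneg_def)
    have bound: "nonneg (\<chi> j. gam i j R + 1)"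
      using comparison_nonneg[OF gam_cls] order_trans[OF vj] by (simp add: nonneg_def add_nonneg_pos)
    have "gam i j (v$j) < gam i j R + 1" for j
      using comparison_mono[OF gam_cls vj(1)[of j] vj(2)[of j], of i j] by linarith
    then have "vgg (\<chi> j. gam i j R + 1) (\<chi> j. gam i j (v$j))"
      by (simp add: vgg_def)
    then have "mu i (\<chi> j. gam i j (v$j)) < mu i (\<chi> j. gam i j R + 1)"
      using mu_maf[of i] arg bound unfolding MAF_def by blast
    moreover have "0 \<le> mu i (\<chi> j. gam i j (v$j))" using mu_maf[of i] arg unfolding MAF_def by blast
    ultimately show ?thesis by (simp add: Gamma_mu_def)
  qed
  then have "(\<Sum>i\<in>UNIV. \<bar>Gamma_mu mu gam v $ i\<bar>) \<le> (\<Sum>i\<in>UNIV. mu i (\<chi> j. gam i j R + 1))"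
    by (intro sum_mono) auto
  then show ?thesis using norm_le_l1_cart[of "Gamma_mu mu gam v"] by linarith
qed

lemma norm_mono_nonneg:
  fixes x y :: "real^'n"
  assumes "nonneg x" "\<And>i. x$i \<le> y$i"
  shows "norm x \<le> norm y"
proof -
  have "(\<Sum>i\<in>UNIV. x$i * x$i) \<le> (\<Sum>i\<in>UNIV. y$i * y$i)"
  proof (intro sum_mono)
    fix i
    have "0 \<le> x$i" using assms(1) by (simp add: nonneg_def)
    then show "x$i * x$i \<le> y$i * y$i" using assms(2)[of i] by (intro mult_mono) auto
  qed
  then show ?thesis by (simp add: norm_le inner_vec_def)
qed

text \<open>Small gain: a nonnegative fixed point of phi lies in the ball of radius kh/2.
  Outside that ball the additive term vanishes and phi(w) = f Gamma_mu(w) with f \<le> 1,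
  so w = phi(w) would give Gamma_mu(w) \<ge> w (or w = 0 if f \<le> 0).\<close>

lemma phi_fixed_point_small:
  assumes gam_cls: "\<And>i j. class_Kinf (gam i j) \<or> zero_fun_on_nonneg (gam i j)"
    and mu_maf: "\<And>i. MAF (mu i)"
    and small_gain: "\<And>s. nonneg s \<Longrightarrow> s \<noteq> 0 \<Longrightarrow> \<not> vge (Gamma_mu mu gam s) s"
    and kh: "kh > 0" and w: "nonneg w" and fp: "phi mu gam k0 kG kh w = w"
  shows "norm w < kh / 2"
proof (rule ccontr)
  assume "\<not> norm w < kh / 2"
  then have nw: "kh / 2 \<le> norm w" by simp
  then have "w \<noteq> 0" using kh by auto
  define f where "f = 1 + min 0 ((kG - 2 * norm w) / (norm w + k0))"
  have f1: "f \<le> 1" unfolding f_def by linarith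
  have "max 0 (kh - 2 * norm w) = 0" using nw by simp
  then have w_eq: "w = f *\<^sub>R Gamma_mu mu gam w"
    using fp unfolding phi_def f_def by simp
  have wi: "w $ i = f * Gamma_mu mu gam w $ i" for i
    using arg_cong[OF w_eq, of "\<lambda>x. x $ i"] by simp
  have Gi: "0 \<le> Gamma_mu mu gam w $ i" for i
    using Gamma_mu_nonneg[OF gam_cls mu_maf w] by (simp add: nonneg_def)
  have wi0: "0 \<le> w $ i" for i using w by (simp add: nonneg_def)
  show False
  proof (cases "f \<le> 0")
    case True
    have "w $ i = 0" for i
      using mult_nonpos_nonneg[OF True Gi[of i]] wi[of i] wi0[of i] by linarith
    then show False using \<open>w \<noteq> 0\<close> by (simp add: vec_eq_iff)
  next
    case False
    then have "w $ i \<le> Gamma_mu mu gam w $ i" for i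
      using wi[of i] Gi[of i] f1 by (simp add: mult_left_le_one_le)
    then show False using small_gain[OF w \<open>w \<noteq> 0\<close>] by (simp add: vge_def)
  qed
qed

text \<open>Near the outer sphere of radius kG + k0 the map phi is small: if
  kG + k0 - e \<le> |v| < kG + k0 then phi(v) = f Gamma_mu(v) with 0 \<le> f \<le> e/k0.\<close>

lemma phi_small_near_outer_sphere:
  assumes "kG / 2 \<le> norm v" "norm v < kG + k0" "kG + k0 - e \<le> norm v"
    and "kh < kG" "0 < k0" "norm (Gamma_mu mu gam v) \<le> B"
  shows "norm (phi mu gam k0 kG kh v) \<le> e / k0 * B"
proof -
  let ?n = "norm v"
  define f where "f = (kG + k0 - ?n) / (?n + k0)"
  have "max 0 (kh - 2 * ?n) = 0" using assms by simp
  moreover have "(kG - 2 * ?n) / (?n + k0) \<le> 0"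
    using assms by (intro divide_nonpos_pos) auto
  moreover have "1 + (kG - 2 * ?n) / (?n + k0) = f"
    unfolding f_def using assms by (simp add: field_simps)
  ultimately have ph: "phi mu gam k0 kG kh v = f *\<^sub>R Gamma_mu mu gam v"
    unfolding phi_def by (simp add: min_absorb2)
  have f0: "0 \<le> f" unfolding f_def using assms by (intro divide_nonneg_pos) auto
  have "f \<le> (kG + k0 - ?n) / k0" unfolding f_def using assms
    by (intro divide_left_mono) auto
  also have "\<dots> \<le> e / k0" using assms by (intro divide_right_mono) auto
  finally have "f \<le> e / k0" .
  then have "f * norm (Gamma_mu mu gam v) \<le> e / k0 * B"
    using f0 assms(6) by (intro mult_mono) auto
  then show ?thesis using ph f0 by simp
qed

section \<open>Geometry of the simplices of K1~(delta)\<close>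

lemma vert_v_increments:
  assumes "j \<le> k" "0 \<le> d"
  shows "0 \<le> (vert_v d z p k - vert_v d z p j)$i \<and> (vert_v d z p k - vert_v d z p j)$i \<le> d * real k"
proof -
  let ?A = "\<lambda>k. real (card {m. m < k \<and> p m = Some i})"
  have "card {m. m < j \<and> p m = Some i} \<le> card {m. m < k \<and> p m = Some i}"
    using assms(1) by (intro card_mono) auto
  moreover have "card {m. m < k \<and> p m = Some i} \<le> k"
    using card_mono[of "{..<k}" "{m. m < k \<and> p m = Some i}"] by auto
  moreover have "(vert_v d z p k - vert_v d z p j)$i = d * (?A k - ?A j)"
    unfolding vert_v_def by (simp add: algebra_simps)
  ultimately show ?thesis
    using assms(2) by (simp add: mult_left_mono)
qed

lemma vert_v_distance:
  fixes z :: "'n::finite \<Rightarrow> int"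
  assumes "j \<le> k" "k \<le> M" "0 \<le> d"
  shows "norm (vert_v d z p k - vert_v d z p j) \<le> real CARD('n) * (d * real M)"
proof -
  have "\<bar>(vert_v d z p k - vert_v d z p j)$i\<bar> \<le> d * real M" for i :: 'n
    using vert_v_increments[OF assms(1,3), of z p i] mult_left_mono[of "real k" "real M" d] assms
    by auto
  then have "(\<Sum>i\<in>UNIV. \<bar>(vert_v d z p k - vert_v d z p j)$i\<bar>) \<le> (\<Sum>i\<in>(UNIV::'n set). d * real M)"
    by (intro sum_mono) auto
  then show ?thesis using norm_le_l1_cart[of "vert_v d z p k - vert_v d z p j"] by simp
qed

text \<open>The homotopy coordinate of every vertex is 0 or 1, since the direction of t is used at
  most once.\<close>

lemma vert_t_unit_interval:
  fixes p :: "nat \<Rightarrow> 'n::finite option"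
  assumes "is_K1_simplex p" "j \<le> CARD('n::finite) + 1"
  shows "0 \<le> vert_t p j \<and> vert_t p j \<le> 1"
proof -
  have "inj_on p {0..<CARD('n) + 1}"
    using assms(1) unfolding is_K1_simplex_def by (rule bij_betw_imp_inj_on)
  then have "card {m. m < j \<and> p m = None} \<le> Suc 0"
    using assms(2) by (subst card_le_Suc0_iff_eq) (auto simp: inj_on_def)
  then show ?thesis by (simp add: vert_t_def)
qed

section \<open>Complete facets\<close>

text \<open>The first column of a lexicographically positive inverse of a labeling matrix consists of
  convex weights for which the weighted sum of the labels vanishes.\<close>

lemma complete_convex_zero:
  fixes l :: "real^('n::{finite,linorder}) \<Rightarrow> real \<Rightarrow> real^('n::{finite,linorder})"
  assumes "complete (lab_matrix l vs ts)"
  shows "\<exists>w. (\<forall>j < CARD('n::{finite,linorder}) + 1. 0 \<le> w j) \<and> (\<Sum>j<CARD('n::{finite,linorder}) + 1. w j) = 1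
           \<and> (\<Sum>j<CARD('n::{finite,linorder}) + 1. w j *\<^sub>R l (vs j) (ts j)) = 0"
proof -
  let ?L = "lab_matrix l vs ts"
  obtain W where W: "\<And>r c. (\<Sum>j<CARD('n) + 1. ?L r j * W j c) = (if r = c then 1 else 0)"
    and lp: "lex_pos W" using assms unfolding complete_def by blast
  have "0 \<le> W j None" if j: "j < CARD('n) + 1" for j
  proof -
    obtain c where "0 < W j c" "\<And>c'. opt_less c' c \<Longrightarrow> W j c' = 0"
      using lp j unfolding lex_pos_def by blast
    then show ?thesis by (cases c) auto
  qed
  moreover have "(\<Sum>j<CARD('n) + 1. W j None) = 1"
    using W[of None None] by (simp add: lab_matrix_def)
  moreover have "(\<Sum>j<CARD('n) + 1. W j None *\<^sub>R l (vs j) (ts j)) = 0"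
  proof (rule iffD2[OF vec_eq_iff], rule allI)
    fix i
    show "(\<Sum>j<CARD('n) + 1. W j None *\<^sub>R l (vs j) (ts j)) $ i = 0 $ i"
      using W[of "Some i" None] by (simp add: lab_matrix_def mult.commute)
  qed
  ultimately show ?thesis by (intro exI[of _ "\<lambda>j. W j None"]) auto
qed

text \<open>A convex combination of the differences q_j - v_j cannot vanish when every v_j dominates
  a nonnegative v_0 whose norm exceeds a common bound r of the |q_j|: the combination of the v_j
  has norm at least |v_0|, that of the q_j at most r.\<close>

lemma convex_combination_nonzero:
  fixes v q :: "nat \<Rightarrow> real^'n"
  assumes w_nonneg: "\<And>j. j < n \<Longrightarrow> 0 \<le> w j" and w_sum: "(\<Sum>j<n. w j) = 1"
    and v0: "nonneg (v 0)" and v_ge: "\<And>j i. j < n \<Longrightarrow> v 0 $ i \<le> v j $ i"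
    and q_bound: "\<And>j. j < n \<Longrightarrow> norm (q j) \<le> r" and r: "r < norm (v 0)"
  shows "(\<Sum>j<n. w j *\<^sub>R (q j - v j)) \<noteq> 0"
proof
  assume "(\<Sum>j<n. w j *\<^sub>R (q j - v j)) = 0"
  then have eq: "(\<Sum>j<n. w j *\<^sub>R q j) = (\<Sum>j<n. w j *\<^sub>R v j)"
    by (simp add: scaleR_diff_right sum_subtractf)
  have "v 0 $ i \<le> (\<Sum>j<n. w j *\<^sub>R v j) $ i" for i
  proof -
    have "(\<Sum>j<n. w j * v 0 $ i) \<le> (\<Sum>j<n. w j * v j $ i)"
      using w_nonneg v_ge by (intro sum_mono) (simp add: mult_left_mono)
    then show ?thesis using w_sum by (simp add: sum_distrib_right[symmetric])
  qed
  then have "norm (v 0) \<le> norm (\<Sum>j<n. w j *\<^sub>R q j)"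
    unfolding eq by (rule norm_mono_nonneg[OF v0])
  also have "\<dots> \<le> (\<Sum>j<n. norm (w j *\<^sub>R q j))"
    by (rule norm_sum)
  also have "\<dots> \<le> (\<Sum>j<n. w j * r)"
    using w_nonneg q_bound by (intro sum_mono) (simp add: mult_left_mono)
  also have "\<dots> = r" using w_sum by (simp add: sum_distrib_right[symmetric])
  finally show False using r by simp
qed

lemma facet_at_outer_sphere_not_complete:
  fixes z :: "'n::{finite,linorder} \<Rightarrow> int" and p :: "nat \<Rightarrow> 'n option"
    and c :: "real^('n::{finite,linorder})"
  defines "N \<equiv> CARD('n::{finite,linorder})"
  assumes kGh: "kG > kh" and k0: "k0 > 0" and c_norm: "norm c < kG / 2" and d: "d > 0"
    and Gb: "\<And>v. nonneg v \<Longrightarrow> norm v \<le> kG + k0 \<Longrightarrow> norm (Gamma_mu mu gam v) \<le> B"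
    and d_small: "real N * (real N + 1) * d * (1 + B / k0) \<le> k0"
    and simplex: "is_K1_simplex p"
    and inner: "\<forall>j\<le>N. nonneg (vert_v d z p j)
             \<and> kG / 2 \<le> norm (vert_v d z p j) \<and> norm (vert_v d z p j) < kG + k0"
    and outer: "kG + k0 \<le> norm (vert_v d z p (N + 1))"
  shows "\<not> complete (lab_matrix (labl (phi mu gam k0 kG kh) c) (vert_v d z p) (vert_t p))"
proof
  let ?v = "vert_v d z p" and ?t = "vert_t p" and ?ph = "phi mu gam k0 kG kh"
  define e where "e = real N * (real N + 1) * d"
  define q where "q j = (1 - ?t j) *\<^sub>R c + ?t j *\<^sub>R ?ph (?v j)" for j
  assume "complete (lab_matrix (labl ?ph c) ?v ?t)"
  then obtain w where w: "\<And>j. j < N + 1 \<Longrightarrow> 0 \<le> w j" "(\<Sum>j<N + 1. w j) = 1"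
    and zero: "(\<Sum>j<N + 1. w j *\<^sub>R (q j - ?v j)) = 0"
    using complete_convex_zero unfolding N_def q_def labl_def by blast
  have near_outer: "kG + k0 - e \<le> norm (?v j)" if "j < N + 1" for j
  proof -
    have "norm (?v (N + 1) - ?v j) \<le> e"
      using vert_v_distance[of j "N + 1" "N + 1" d z p] that d
      unfolding e_def N_def by (simp add: algebra_simps)
    then show ?thesis using outer norm_triangle_ineq2[of "?v (N + 1)" "?v j"] by linarith
  qed
  have "norm (q j) \<le> norm c + e / k0 * B" if j: "j < N + 1" for j
  proof -
    have vj: "nonneg (?v j)" "kG / 2 \<le> norm (?v j)" "norm (?v j) < kG + k0"
      using inner j by auto
    have "norm (?ph (?v j)) \<le> e / k0 * B"
      using near_outer[OF j] vj kGh k0 Gb[OF vj(1)] by (intro phi_small_near_outer_sphere) auto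
    moreover have t: "0 \<le> ?t j" "?t j \<le> 1"
      using vert_t_unit_interval[OF simplex, of j] j unfolding N_def by auto
    moreover have "norm (q j) \<le> norm ((1 - ?t j) *\<^sub>R c) + norm (?t j *\<^sub>R ?ph (?v j))"
      unfolding q_def by (rule norm_triangle_ineq)
    moreover have "\<dots> = (1 - ?t j) * norm c + ?t j * norm (?ph (?v j))"
      using t by simp
    moreover have "(1 - ?t j) * norm c \<le> norm c" "?t j * norm (?ph (?v j)) \<le> norm (?ph (?v j))"
      using t by (simp_all add: mult_left_le_one_le)
    ultimately show ?thesis by linarith
  qed
  moreover have "norm c + e / k0 * B < norm (?v 0)"
  proof -
    have "e * (1 + B / k0) \<le> k0" using d_small unfolding e_def .
    then have "e + e / k0 * B \<le> k0" by (simp add: distrib_left)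
    then show ?thesis using near_outer[of 0] c_norm norm_ge_zero[of c] by linarith
  qed
  moreover have "?v 0 $ i \<le> ?v j $ i" for i j
    using vert_v_increments[of 0 j d z p i] d by simp
  ultimately have "(\<Sum>j<N + 1. w j *\<^sub>R (q j - ?v j)) \<noteq> 0"
    using w by (intro convex_combination_nonzero[where r = "norm c + e / k0 * B"])
      (simp_all add: inner)
  then show False using zero by contradiction
qed

lemma exists_small_delta:
  fixes a k0 K B s :: real
  assumes "0 < a" "0 < k0" "0 < K" "0 \<le> B" "0 \<le> s"
  shows "\<exists>d>0. d * s < a \<and> K * d * (1 + B / k0) \<le> k0"
proof -
  define d where "d = min (a / (s + 1)) (k0 / (K * (1 + B / k0)))"
  have C: "0 < 1 + B / k0" using assms by (simp add: add_pos_nonneg)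
  have "d * s \<le> a / (s + 1) * s" unfolding d_def using assms by (intro mult_right_mono) auto
  also have "\<dots> < a" using assms by (simp add: field_simps)
  finally have "d * s < a" .
  moreover have "K * d * (1 + B / k0) \<le> K * (k0 / (K * (1 + B / k0))) * (1 + B / k0)"
    unfolding d_def using assms C by (intro mult_right_mono mult_left_mono) auto
  moreover have "0 < d" unfolding d_def using assms C by simp
  ultimately show ?thesis using assms C by auto
qed

theorem mainTheorem5:
  fixes mu :: "'n::{finite,linorder} \<Rightarrow> real^('n::{finite,linorder}) \<Rightarrow> real"
    and gam :: "'n \<Rightarrow> 'n \<Rightarrow> real \<Rightarrow> real"
    and k0 kG kh :: real
    and c :: "real^('n::{finite,linorder})"
  assumes gam_cls: "\<And>i j. class_Kinf (gam i j) \<or> zero_fun_on_nonneg (gam i j)"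
    and mu_maf: "\<And>i. MAF (mu i)"
    and small_gain: "\<And>s. nonneg s \<Longrightarrow> s \<noteq> 0 \<Longrightarrow> \<not> vge (Gamma_mu mu gam s) s"
    and no_zero_row: "\<And>i. Gamma_mu mu gam evec $ i \<noteq> 0"
    and k0: "k0 > 0" and kh: "kh > 0" and kGh: "kG > kh"
    and c_pos: "vgg c 0" and c_norm: "norm c < kG / 2"
  shows "\<exists>d>0.
     (\<forall>z p. is_K1_simplex p \<longrightarrow>
        (\<forall>j\<le>CARD('n::{finite,linorder}). nonneg (vert_v d z p j)
             \<and> kG / 2 \<le> norm (vert_v d z p j) \<and> norm (vert_v d z p j) < kG + k0) \<longrightarrow>
        kG + k0 \<le> norm (vert_v d z p (CARD('n::{finite,linorder}) + 1)) \<longrightarrow>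
        norm (vert_v d z p (CARD('n::{finite,linorder}) + 1)) \<le> kG + k0 + d \<longrightarrow>
        \<not> complete (lab_matrix (labl (phi mu gam k0 kG kh) c) (vert_v d z p) (vert_t p)))
     \<and> d * sqrt (real CARD('n::{finite,linorder})) < (kG - kh) / 2
     \<and> (\<forall>w v. nonneg w \<and> phi mu gam k0 kG kh w = w \<and> nonneg v
          \<and> dist v w < d * sqrt (real CARD('n::{finite,linorder})) \<longrightarrow> norm v < kG / 2)"
proof -
  let ?N = "CARD('n::{finite,linorder})"
  define B where "B = (\<Sum>i\<in>UNIV. mu i (\<chi> j. gam i j (kG + k0) + 1))"
  have Gb: "norm (Gamma_mu mu gam v) \<le> B" if "nonneg v" "norm v \<le> kG + k0" for v
    unfolding B_def using that by (rule Gamma_mu_bounded[OF gam_cls mu_maf])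
  have "norm (Gamma_mu mu gam 0) \<le> B"
    using k0 kh kGh by (intro Gb) (auto simp: nonneg_def)
  then have "0 \<le> B" by (rule order_trans[OF norm_ge_zero])
  then obtain d where d: "d > 0" and d_sqrt: "d * sqrt (real ?N) < (kG - kh) / 2"
    and d_small: "real ?N * (real ?N + 1) * d * (1 + B / k0) \<le> k0"
    using exists_small_delta[of "(kG - kh) / 2" k0 "real ?N * (real ?N + 1)" B "sqrt (real ?N)"]
      kGh k0 by (auto simp: mult.assoc)
  have "norm v < kG / 2"
    if w: "nonneg w" "phi mu gam k0 kG kh w = w" and v: "dist v w < d * sqrt (real ?N)"
    for v w :: "real^('n::{finite,linorder})"
  proof -
    have "norm w < kh / 2"
      using gam_cls mu_maf small_gain kh w by (rule phi_fixed_point_small)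
    then show ?thesis using v d_sqrt norm_triangle_sub[of v w] unfolding dist_norm by argo
  qed
  moreover have "\<not> complete (lab_matrix (labl (phi mu gam k0 kG kh) c) (vert_v d z p) (vert_t p))"
    if "is_K1_simplex p" "\<forall>j\<le>?N. nonneg (vert_v d z p j)
             \<and> kG / 2 \<le> norm (vert_v d z p j) \<and> norm (vert_v d z p j) < kG + k0"
      "kG + k0 \<le> norm (vert_v d z p (?N + 1))" for z p
    using facet_at_outer_sphere_not_complete[OF kGh k0 c_norm d Gb d_small that] .
  ultimately show ?thesis using d d_sqrt by blast
qed

end
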